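(* Let $p\ge 1$. (1) For $n\ge1$ and $x_1,\dots,x_n\in\mathbb{R}$, the map $t\mapsto s_p^p(x_1,\dots,x_n,t)$ is convex, decreasing on $\mathbb{R}_-$ and increasing on $\mathbb{R}_+$. (2) For $n\ge 1$ and $x_1,\dots,x_{n+1}\in\mathbb{R}$, $s_p^p(x_1,\dots,x_{n+1})-s_p^p(x_1,\dots,x_n)\ge|x_{n+1}|^p$ in all cases, and $\ge p|x_n|^{p-1}|x_{n+1}|$ if $x_{n+1}$ and $x_n$ have the same sign. (3) Symmetrically, the map $t\mapsto s_p^p(t,x_1,\dots,x_n)$ is convex, decreasing on $\mathbb{R}_-$ and increasing on $\mathbb{R}_+$, and for $x_0,x_1,\dots,x_n\in\mathbb{R}$, $s_p^p(x_0,x_1,\dots,x_n)-s_p^p(x_1,\dots,x_n)\ge|x_0|^p$ in all cases and $\ge p|x_1|^{p-1}|x_0|$ if $x_0$ and $x_1$ have the same sign.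
   Context: For a finite real sequence $x=(x_1,\dots,x_n)$, the maximal $p$-sum is $s_p(x)=\big(\sup_{k\le n}\sup_{0=i_0<\dots<i_k=n}\sum_{j=0}^{k-1}\big|\sum_{\ell=i_j+1}^{i_{j+1}}x_\ell\big|^p\big)^{1/p}$. *)

theory Defs
  imports "HOL-Analysis.Analysis"
begin

text \<open>Admissible cut-point lists 0 = i_0 < i_1 < ... < i_k = n (k ranges over all values
  allowed by strict monotonicity, so k \<le> n automatically).\<close>
definition cuts :: "nat \<Rightarrow> nat list set" where
  "cuts n = {is. is \<noteq> [] \<and> sorted_wrt (<) is \<and> hd is = 0 \<and> last is = n}"

text \<open>The sum of |block sums|^p for a given cut list; the list xs is 0-indexed,
  so the block (i_j, i_{j+1}] of the paper is {i_j ..< i_{j+1}} here.\<close>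
definition block_psum :: "real \<Rightarrow> real list \<Rightarrow> nat list \<Rightarrow> real" where
  "block_psum p xs is =
     (\<Sum>j<length is - 1. \<bar>\<Sum>l\<in>{is ! j ..< is ! (j+1)}. xs ! l\<bar> powr p)"

definition sp :: "real \<Rightarrow> real list \<Rightarrow> real" where
  "sp p xs = (SUP is\<in>cuts (length xs). block_psum p xs is) powr (1 / p)"

end

theory Submission
  imports Defs
begin

(* s_p^p(x) is the maximum, over all partitions of x into consecutive nonempty blocks, of the
   sum of |block sum|^p. In a partition of x @ [t] the entry t either is a block of its own or
   ends the last block; either way the partition contributes A + |c + t|^p, a convex function
   of t that minorises s_p^p(x @ [t]), so s_p^p(x @ [t]) is convex in t. Appending t as a
   separate block gains |t|^p, while a trailing 0 gains nothing, so t = 0 is the minimum.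
   If the last entry x_n and t have the same sign, the last block of an optimal partition of x
   has a sum c with c x_n > 0 and |c| >= |x_n|, since otherwise splitting off x_n would be
   better; appending t to that block gains |c + t|^p - |c|^p >= p |c|^(p-1) |t|. Prepending
   reduces to appending by reversing the sequence. *)

lemma convex_on_powr_nonneg:
  assumes "p \<ge> 1"
  shows "convex_on {0..} (\<lambda>x::real. x powr p)"
proof (rule convex_on_linorderI)
  fix t x y :: real
  assume t: "0 < t" "t < 1" and xy: "x \<in> {0..}" "y \<in> {0..}" "x < y"
  show "((1 - t) *\<^sub>R x + t *\<^sub>R y) powr p \<le> (1 - t) * x powr p + t * y powr p"
  proof (cases "x = 0")
    case True
    have "(t * y) powr p = t powr p * y powr p"
      using t xy by (simp add: powr_mult)
    also have "\<dots> \<le> t * y powr p"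
      using t assms by (intro mult_right_mono powr_le_one_le) auto
    finally show ?thesis using True by simp
  next
    case False
    then show ?thesis
      using convex_onD[OF powr_convex[OF assms], of t x y] t xy by simp
  qed
qed (rule convex_real_interval)

lemma convex_on_abs_add_powr:
  assumes "p \<ge> 1"
  shows "convex_on UNIV (\<lambda>t::real. \<bar>c + t\<bar> powr p)"
proof (rule convex_onI)
  fix u x y :: real
  assume u: "0 < u" "u < 1"
  let ?z = "(1 - u) *\<^sub>R x + u *\<^sub>R y"
  have "c + ?z = (1 - u) * (c + x) + u * (c + y)"
    by (simp add: algebra_simps)
  then have "\<bar>c + ?z\<bar> \<le> (1 - u) * \<bar>c + x\<bar> + u * \<bar>c + y\<bar>"
    using u abs_triangle_ineq[of "(1 - u) * (c + x)" "u * (c + y)"] by (simp add: abs_mult)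
  then have "\<bar>c + ?z\<bar> powr p \<le> ((1 - u) * \<bar>c + x\<bar> + u * \<bar>c + y\<bar>) powr p"
    using assms by (intro powr_mono2) auto
  also have "\<dots> \<le> (1 - u) * \<bar>c + x\<bar> powr p + u * \<bar>c + y\<bar> powr p"
    using convex_onD[OF convex_on_powr_nonneg[OF assms], of u "\<bar>c + x\<bar>" "\<bar>c + y\<bar>"] u by simp
  finally show "\<bar>c + ?z\<bar> powr p \<le> (1 - u) * \<bar>c + x\<bar> powr p + u * \<bar>c + y\<bar> powr p" .
qed simp

lemma convex_on_if_convex_minorants:
  fixes f :: "'a::real_vector \<Rightarrow> real"
  assumes "convex S"
    and "\<And>z. z \<in> S \<Longrightarrow> \<exists>g. convex_on S g \<and> (\<forall>x\<in>S. g x \<le> f x) \<and> g z = f z"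
  shows "convex_on S f"
proof (rule convex_onI)
  fix u :: real and x y assume u: "0 < u" "u < 1" and xy: "x \<in> S" "y \<in> S"
  let ?z = "(1 - u) *\<^sub>R x + u *\<^sub>R y"
  have "?z \<in> S" using assms(1) u xy by (simp add: convexD)
  then obtain g where g: "convex_on S g" "\<forall>x\<in>S. g x \<le> f x" "g ?z = f ?z"
    using assms(2) by blast
  have "f ?z \<le> (1 - u) * g x + u * g y"
    using convex_onD[OF g(1), of u x y] u xy g(3) by simp
  also have "\<dots> \<le> (1 - u) * f x + u * f y"
    using g(2) u xy by (intro add_mono mult_left_mono) auto
  finally show "f ?z \<le> (1 - u) * f x + u * f y" .
qed (rule assms(1))

lemma convex_on_mono_away_from_minimum:
  fixes f :: "real \<Rightarrow> real"
  assumes "convex_on UNIV f" and "\<And>t. f a \<le> f t"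
  shows "mono_on {a..} f" and "antimono_on {..a} f"
proof -
  have between: "f m \<le> max (f l) (f r)" if "l \<le> m" "m \<le> r" for l m r
    using convex_on_le_max[OF convex_on_subset[OF assms(1)], where x = l and y = r and a = m] that
    by simp
  show "mono_on {a..} f"
    by (rule monotone_onI) (use between[of a] assms(2) in \<open>fastforce simp: max_absorb2\<close>)
  show "antimono_on {..a} f"
    by (rule monotone_onI) (use between[where r = a] assms(2) in \<open>fastforce simp: max_absorb1\<close>)
qed

lemma powr_add_ge_tangent:
  fixes a b p :: real
  assumes "0 < a" "0 \<le> b" "1 \<le> p"
  shows "a powr p + p * a powr (p - 1) * b \<le> (a + b) powr p"
proof -
  have "p * a powr (p - 1) * ((a + b) - a) \<le> (a + b) powr p - a powr p"
  proof (rule convex_on_imp_above_tangent[where A = "{0<..}"])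
    show "((\<lambda>x. x powr p) has_field_derivative p * a powr (p - 1)) (at a within {0<..})"
      using has_real_derivative_powr[OF assms(1), of p] by (rule has_field_derivative_at_within)
  qed (use assms powr_convex in \<open>auto simp: interior_open\<close>)
  then show ?thesis by simp
qed

lemma same_sign_if_powr_superadditive:
  fixes s x p :: real
  assumes "0 < p" "x \<noteq> 0" "\<bar>s\<bar> powr p + \<bar>x\<bar> powr p \<le> \<bar>s + x\<bar> powr p"
  shows "\<bar>x\<bar> \<le> \<bar>s + x\<bar>" and "0 < (s + x) * x"
proof -
  have "0 < \<bar>x\<bar> powr p" "0 \<le> \<bar>s\<bar> powr p"
    using assms(2) by auto
  then have "\<bar>x\<bar> powr p \<le> \<bar>s + x\<bar> powr p" and "\<bar>s\<bar> powr p < \<bar>s + x\<bar> powr p"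
    using assms(3) by linarith+
  then have "\<bar>x\<bar> \<le> \<bar>s + x\<bar>" and "\<bar>s\<bar> < \<bar>s + x\<bar>"
    using assms(1) powr_less_mono2[of p] powr_mono2[of p] by (meson abs_ge_zero less_eq_real_def not_le)+
  then show "\<bar>x\<bar> \<le> \<bar>s + x\<bar>" "0 < (s + x) * x"
    using assms(2) by (auto simp: abs_if zero_less_mult_iff split: if_splits)
qed

definition partitions :: "'a list \<Rightarrow> 'a list list set" where
  "partitions xs = {bs. concat bs = xs \<and> [] \<notin> set bs}"

definition partition_psum :: "real \<Rightarrow> real list list \<Rightarrow> real" where
  "partition_psum p bs = (\<Sum>b\<leftarrow>bs. \<bar>sum_list b\<bar> powr p)"

definition max_psum :: "real \<Rightarrow> real list \<Rightarrow> real" where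
  "max_psum p xs = Max (partition_psum p ` partitions xs)"

lemma partition_psum_Nil [simp]: "partition_psum p [] = 0"
  and partition_psum_Cons [simp]: "partition_psum p (b # bs) = \<bar>sum_list b\<bar> powr p + partition_psum p bs"
  and partition_psum_append [simp]: "partition_psum p (bs @ cs) = partition_psum p bs + partition_psum p cs"
  by (simp_all add: partition_psum_def)

lemma partition_psum_nonneg: "0 \<le> partition_psum p bs"
  by (induction bs) auto

lemma length_le_length_concat: "[] \<notin> set bs \<Longrightarrow> length bs \<le> length (concat bs)"
proof (induction bs)
  case (Cons b bs)
  then show ?case by (cases b) auto
qed simp

lemma finite_partitions: "finite (partitions xs)"
proof (rule finite_subset)
  let ?blocks = "{b. set b \<subseteq> set xs \<and> length b \<le> length xs}"
  show "partitions xs \<subseteq> {bs. set bs \<subseteq> ?blocks \<and> length bs \<le> length xs}"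
  proof clarify
    fix bs assume "bs \<in> partitions xs"
    then have bs: "concat bs = xs" "[] \<notin> set bs" by (auto simp: partitions_def)
    have "b \<in> ?blocks" if "b \<in> set bs" for b
      using that bs(1) member_le_sum_list[of "length b" "map length bs"] by (auto simp: length_concat)
    then show "set bs \<subseteq> ?blocks \<and> length bs \<le> length xs"
      using bs length_le_length_concat by blast
  qed
  show "finite {bs. set bs \<subseteq> ?blocks \<and> length bs \<le> length xs}"
    by (intro finite_lists_length_le) (auto intro: finite_lists_length_le)
qed

lemma partitions_nonempty: "partitions xs \<noteq> {}"
proof -
  have "(if xs = [] then [] else [xs]) \<in> partitions xs" by (simp add: partitions_def)
  then show ?thesis by blast
qed

lemma max_psum_ge: "bs \<in> partitions xs \<Longrightarrow> partition_psum p bs \<le> max_psum p xs"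
  unfolding max_psum_def by (simp add: finite_partitions)

lemma max_psum_attained: obtains bs where "bs \<in> partitions xs" "max_psum p xs = partition_psum p bs"
proof -
  have "max_psum p xs \<in> partition_psum p ` partitions xs"
    unfolding max_psum_def by (simp add: finite_partitions partitions_nonempty)
  then show ?thesis using that by blast
qed

lemma max_psum_nonneg: "0 \<le> max_psum p xs"
  by (metis max_psum_attained partition_psum_nonneg)

fun blocks :: "nat list \<Rightarrow> 'a list \<Rightarrow> 'a list list" where
  "blocks (i # j # is) xs = take (j - i) (drop i xs) # blocks (j # is) xs"
| "blocks _ xs = []"

fun cut_points :: "nat \<Rightarrow> 'a list list \<Rightarrow> nat list" where
  "cut_points a [] = [a]"
| "cut_points a (b # bs) = a # cut_points (a + length b) bs"

lemma block_psum_Cons_Cons: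
  "block_psum p xs (i # j # is) = \<bar>\<Sum>l\<in>{i..<j}. xs ! l\<bar> powr p + block_psum p xs (j # is)"
  by (simp add: block_psum_def sum.lessThan_Suc_shift del: sum.lessThan_Suc)

lemma sum_list_take_drop:
  assumes "i \<le> j" "j \<le> length xs"
  shows "sum_list (take (j - i) (drop i xs)) = (\<Sum>l\<in>{i..<j}. xs ! l)"
proof -
  have "sum_list (take (j - i) (drop i xs)) = (\<Sum>k<j - i. xs ! (i + k))"
    using assms by (simp add: sum_list_sum_nth atLeast0LessThan)
  also have "\<dots> = (\<Sum>l\<in>{i..<j}. xs ! l)"
    using assms by (simp add: sum.atLeastLessThan_shift_0[of "(!) xs" i j] atLeast0LessThan add.commute)
  finally show ?thesis .
qed

lemma hd_le_last_sorted: "sorted_wrt (<) (j # is) \<Longrightarrow> (j::'a::order) \<le> last (j # is)"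
  by (induction "is" rule: rev_induct) (auto simp: sorted_wrt_append)

lemma concat_blocks:
  "sorted_wrt (<) (i # is) \<Longrightarrow> last (i # is) \<le> length xs \<Longrightarrow>
    concat (blocks (i # is) xs) = take (last (i # is) - i) (drop i xs)"
proof (induction "is" arbitrary: i)
  case (Cons j "is")
  define l where "l = last (j # is)"
  have "i < j" "j \<le> l"
    using Cons.prems(1) hd_le_last_sorted[of j "is"] by (auto simp: l_def)
  then have "take (l - i) (drop i xs) = take ((j - i) + (l - j)) (drop i xs)"
    by simp
  also have "\<dots> = take (j - i) (drop i xs) @ take (l - j) (drop (j - i) (drop i xs))"
    by (rule take_add)
  also have "drop (j - i) (drop i xs) = drop j xs"
    using \<open>i < j\<close> by simp
  finally have "take (j - i) (drop i xs) @ take (l - j) (drop j xs) = take (l - i) (drop i xs)" ..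
  then show ?case using Cons by (simp add: l_def)
qed simp

lemma blocks_nonempty:
  "sorted_wrt (<) (i # is) \<Longrightarrow> last (i # is) \<le> length xs \<Longrightarrow> [] \<notin> set (blocks (i # is) xs)"
proof (induction "is" arbitrary: i)
  case (Cons j "is")
  then show ?case using hd_le_last_sorted[of j "is"] by auto
qed simp

lemma partition_psum_blocks:
  "sorted_wrt (<) (i # is) \<Longrightarrow> last (i # is) \<le> length xs \<Longrightarrow>
    partition_psum p (blocks (i # is) xs) = block_psum p xs (i # is)"
proof (induction "is" arbitrary: i)
  case (Cons j "is")
  then show ?case
    using hd_le_last_sorted[of j "is"] by (auto simp: block_psum_Cons_Cons sum_list_take_drop)
qed (simp add: block_psum_def)

lemma cut_points_ge: "k \<in> set (cut_points a bs) \<Longrightarrow> a \<le> k"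
  by (induction a bs rule: cut_points.induct) fastforce+

lemma cut_points_nonempty [simp]: "cut_points a bs \<noteq> []"
  and hd_cut_points [simp]: "hd (cut_points a bs) = a"
  by (cases bs; simp)+

lemma blocks_Cons: "is \<noteq> [] \<Longrightarrow> blocks (i # is) xs = take (hd is - i) (drop i xs) # blocks is xs"
  by (cases "is") auto

lemma sorted_cut_points: "[] \<notin> set bs \<Longrightarrow> sorted_wrt (<) (cut_points a bs)"
proof (induction a bs rule: cut_points.induct)
  case (2 a b bs)
  then show ?case using cut_points_ge[of _ "a + length b" bs] by (cases b) fastforce+
qed simp

lemma last_cut_points: "last (cut_points a bs) = a + length (concat bs)"
  by (induction a bs rule: cut_points.induct) simp_all

lemma blocks_cut_points: "length ys = a \<Longrightarrow> blocks (cut_points a bs) (ys @ concat bs @ zs) = bs"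
proof (induction bs arbitrary: a ys)
  case (Cons b bs)
  have "blocks (cut_points (a + length b) bs) ((ys @ b) @ concat bs @ zs) = bs"
    using Cons by (intro Cons.IH) simp
  then show ?case
    using Cons.prems by (simp add: blocks_Cons)
qed simp

lemma blocks_of_cuts:
  assumes "is \<in> cuts (length xs)"
  shows "blocks is xs \<in> partitions xs" and "partition_psum p (blocks is xs) = block_psum p xs is"
proof -
  obtain is' where "is = 0 # is'" "sorted_wrt (<) (0 # is')" "last (0 # is') = length xs"
    using assms by (cases "is") (auto simp: cuts_def)
  then show "blocks is xs \<in> partitions xs" "partition_psum p (blocks is xs) = block_psum p xs is"
    using concat_blocks blocks_nonempty partition_psum_blocks by (fastforce simp: partitions_def)+
qed

lemma cut_points_of_partition:
  assumes "bs \<in> partitions xs"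
  shows "cut_points 0 bs \<in> cuts (length xs)" and "blocks (cut_points 0 bs) xs = bs"
  using assms sorted_cut_points[of bs 0] last_cut_points[of 0 bs] blocks_cut_points[of "[]" 0 bs "[]"]
  by (auto simp: cuts_def partitions_def)

lemma block_psum_image_cuts: "block_psum p xs ` cuts (length xs) = partition_psum p ` partitions xs"
proof (intro equalityI image_subsetI)
  show "block_psum p xs is \<in> partition_psum p ` partitions xs" if "is \<in> cuts (length xs)" for "is"
    using blocks_of_cuts[OF that] by (metis image_eqI)
  show "partition_psum p bs \<in> block_psum p xs ` cuts (length xs)" if "bs \<in> partitions xs" for bs
    using cut_points_of_partition[OF that] blocks_of_cuts(2) by (metis image_eqI)
qed

lemma sp_powr_eq_max_psum:
  assumes "p > 0"
  shows "sp p xs powr p = max_psum p xs"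
proof -
  have "(SUP is\<in>cuts (length xs). block_psum p xs is) = max_psum p xs"
    unfolding block_psum_image_cuts max_psum_def
    by (simp add: cSup_eq_Max finite_partitions partitions_nonempty)
  then show ?thesis
    using assms max_psum_nonneg by (simp add: sp_def powr_powr)
qed

lemma max_psum_rev_le: "max_psum p xs \<le> max_psum p (rev xs)"
proof -
  obtain bs where bs: "bs \<in> partitions xs" "max_psum p xs = partition_psum p bs"
    by (rule max_psum_attained)
  have "rev (map rev bs) \<in> partitions (rev xs)"
    using bs(1) by (auto simp: partitions_def rev_concat rev_map)
  moreover have "partition_psum p (rev (map rev bs)) = partition_psum p bs"
    by (simp add: partition_psum_def rev_map[symmetric] o_def sum_list.rev)
  ultimately show ?thesis
    using bs(2) max_psum_ge by metis
qed

lemma max_psum_rev: "max_psum p (rev xs) = max_psum p xs"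
  using max_psum_rev_le[of p xs] max_psum_rev_le[of p "rev xs"] by simp

lemma partition_snocE:
  assumes "cs \<in> partitions (xs @ [z])"
  obtains B b where "cs = B @ [b @ [z]]" and "concat B @ b = xs" and "[] \<notin> set B"
proof -
  have cs: "concat cs = xs @ [z]" "[] \<notin> set cs"
    using assms by (auto simp: partitions_def)
  then obtain B c where Bc: "cs = B @ [c]"
    by (cases cs rule: rev_cases) auto
  with cs have "c \<noteq> []"
    by auto
  moreover have "last (concat B @ c) = z"
    using cs(1) Bc by simp
  ultimately have "last c = z"
    by simp
  with \<open>c \<noteq> []\<close> obtain b where "c = b @ [z]"
    by (metis append_butlast_last_id)
  with Bc cs show ?thesis
    using that by auto
qed

lemma convex_max_psum_snoc:
  assumes "p \<ge> 1"
  shows "convex_on UNIV (\<lambda>t. max_psum p (xs @ [t]))"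
proof (rule convex_on_if_convex_minorants)
  fix z :: real
  obtain cs where cs: "cs \<in> partitions (xs @ [z])" "max_psum p (xs @ [z]) = partition_psum p cs"
    by (rule max_psum_attained)
  obtain B b where Bb: "cs = B @ [b @ [z]]" "concat B @ b = xs" "[] \<notin> set B"
    using cs(1) by (rule partition_snocE)
  let ?g = "\<lambda>t. partition_psum p B + \<bar>sum_list b + t\<bar> powr p"
  have "convex_on UNIV ?g"
    using convex_on_abs_add_powr[OF assms] by (intro convex_on_add) (simp_all add: convex_on_const)
  moreover have "?g t \<le> max_psum p (xs @ [t])" for t
    using max_psum_ge[of "B @ [b @ [t]]" "xs @ [t]" p] Bb by (simp add: partitions_def)
  moreover have "?g z = max_psum p (xs @ [z])"
    using cs(2) Bb(1) by simp
  ultimately show "\<exists>g. convex_on UNIV g \<and> (\<forall>t\<in>UNIV. g t \<le> max_psum p (xs @ [t])) \<and>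
      g z = max_psum p (xs @ [z])"
    by blast
qed simp

lemma max_psum_snoc_ge: "max_psum p xs + \<bar>y\<bar> powr p \<le> max_psum p (xs @ [y])"
proof -
  obtain bs where bs: "bs \<in> partitions xs" "max_psum p xs = partition_psum p bs"
    by (rule max_psum_attained)
  then have "bs @ [[y]] \<in> partitions (xs @ [y])"
    by (simp add: partitions_def)
  then show ?thesis
    using bs(2) max_psum_ge[of "bs @ [[y]]"] by simp
qed

lemma max_psum_snoc_zero: "max_psum p (xs @ [0]) \<le> max_psum p xs"
proof -
  obtain cs where cs: "cs \<in> partitions (xs @ [0])" "max_psum p (xs @ [0]) = partition_psum p cs"
    by (rule max_psum_attained)
  obtain B b where Bb: "cs = B @ [b @ [0]]" "concat B @ b = xs" "[] \<notin> set B"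
    using cs(1) by (rule partition_snocE)
  show ?thesis
  proof (cases "b = []")
    case True
    then have "B \<in> partitions xs"
      using Bb by (simp add: partitions_def)
    from max_psum_ge[OF this, of p] show ?thesis
      using cs(2) Bb(1) True by simp
  next
    case False
    then have "B @ [b] \<in> partitions xs"
      using Bb by (simp add: partitions_def)
    from max_psum_ge[OF this, of p] show ?thesis
      using cs(2) Bb(1) by simp
  qed
qed

lemma max_psum_last_block:
  assumes "B @ [b @ [x]] \<in> partitions xs" "max_psum p xs = partition_psum p (B @ [b @ [x]])"
  shows "\<bar>sum_list b\<bar> powr p + \<bar>x\<bar> powr p \<le> \<bar>sum_list b + x\<bar> powr p"
proof (cases "b = []")
  case False
  then have "B @ [b, [x]] \<in> partitions xs"
    using assms(1) by (simp add: partitions_def)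
  from max_psum_ge[OF this, of p] show ?thesis
    using assms(2) by simp
qed simp

lemma max_psum_snoc_same_sign:
  assumes "p \<ge> 1" "xs \<noteq> []" "last xs * y > 0"
  shows "max_psum p xs + p * \<bar>last xs\<bar> powr (p - 1) * \<bar>y\<bar> \<le> max_psum p (xs @ [y])"
proof -
  let ?x = "last xs"
  obtain bs where bs: "bs \<in> partitions xs" "max_psum p xs = partition_psum p bs"
    by (rule max_psum_attained)
  from bs(1) have "bs \<in> partitions (butlast xs @ [?x])"
    using assms(2) by simp
  then obtain B b where Bb: "bs = B @ [b @ [?x]]"
    by (rule partition_snocE)
  define c where "c = sum_list b + ?x"
  have "\<bar>sum_list b\<bar> powr p + \<bar>?x\<bar> powr p \<le> \<bar>c\<bar> powr p"
    using max_psum_last_block bs Bb unfolding c_def by blast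
  moreover have "?x \<noteq> 0"
    using assms(3) by auto
  ultimately have "\<bar>?x\<bar> \<le> \<bar>c\<bar>" "0 < c * ?x"
    using same_sign_if_powr_superadditive[of p "?x" "sum_list b"] assms(1) unfolding c_def by auto
  then have "0 < \<bar>c\<bar>" "\<bar>c + y\<bar> = \<bar>c\<bar> + \<bar>y\<bar>"
    using assms(3) by (auto simp: zero_less_mult_iff)
  have "max_psum p xs + p * \<bar>?x\<bar> powr (p - 1) * \<bar>y\<bar>
      \<le> partition_psum p B + \<bar>c\<bar> powr p + p * \<bar>c\<bar> powr (p - 1) * \<bar>y\<bar>"
    using bs(2) Bb \<open>\<bar>?x\<bar> \<le> \<bar>c\<bar>\<close> assms(1)
    by (auto simp: c_def intro!: mult_right_mono mult_left_mono powr_mono2)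
  also have "\<dots> \<le> partition_psum p B + \<bar>c + y\<bar> powr p"
    using powr_add_ge_tangent[OF \<open>0 < \<bar>c\<bar>\<close> _ assms(1), of "\<bar>y\<bar>"] \<open>\<bar>c + y\<bar> = \<bar>c\<bar> + \<bar>y\<bar>\<close>
    by simp
  also have "\<dots> \<le> max_psum p (xs @ [y])"
    using max_psum_ge[of "B @ [b @ [?x, y]]" "xs @ [y]" p] bs(1) Bb
    by (simp add: partitions_def c_def add.assoc)
  finally show ?thesis .
qed

lemma max_psum_snoc_monotone:
  assumes "p \<ge> 1"
  shows "mono_on {0..} (\<lambda>t. max_psum p (xs @ [t]))"
    and "antimono_on {..0} (\<lambda>t. max_psum p (xs @ [t]))"
proof -
  have "max_psum p (xs @ [0]) \<le> max_psum p (xs @ [t])" for t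
    using max_psum_snoc_zero[of p xs] max_psum_snoc_ge[of p xs t] powr_ge_zero[of "\<bar>t\<bar>" p]
    by linarith
  then show "mono_on {0..} (\<lambda>t. max_psum p (xs @ [t]))"
    and "antimono_on {..0} (\<lambda>t. max_psum p (xs @ [t]))"
    using convex_on_mono_away_from_minimum[OF convex_max_psum_snoc[OF assms]] by blast+
qed

theorem proposition2p2:
  fixes p :: real and xs :: "real list"
  assumes "p \<ge> 1" and "xs \<noteq> []"
  shows
    "convex_on UNIV (\<lambda>t. sp p (xs @ [t]) powr p) \<and>
     antimono_on {..0} (\<lambda>t. sp p (xs @ [t]) powr p) \<and>
     mono_on {0..} (\<lambda>t. sp p (xs @ [t]) powr p) \<and>
     (\<forall>y. sp p (xs @ [y]) powr p - sp p xs powr p \<ge> \<bar>y\<bar> powr p) \<and>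
     (\<forall>y. last xs * y > 0 \<longrightarrow>
        sp p (xs @ [y]) powr p - sp p xs powr p \<ge> p * \<bar>last xs\<bar> powr (p - 1) * \<bar>y\<bar>) \<and>
     convex_on UNIV (\<lambda>t. sp p (t # xs) powr p) \<and>
     antimono_on {..0} (\<lambda>t. sp p (t # xs) powr p) \<and>
     mono_on {0..} (\<lambda>t. sp p (t # xs) powr p) \<and>
     (\<forall>y. sp p (y # xs) powr p - sp p xs powr p \<ge> \<bar>y\<bar> powr p) \<and>
     (\<forall>y. hd xs * y > 0 \<longrightarrow>
        sp p (y # xs) powr p - sp p xs powr p \<ge> p * \<bar>hd xs\<bar> powr (p - 1) * \<bar>y\<bar>)"
proof -
  have snoc: "convex_on UNIV (\<lambda>t. max_psum p (ys @ [t])) \<and>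
      antimono_on {..0} (\<lambda>t. max_psum p (ys @ [t])) \<and> mono_on {0..} (\<lambda>t. max_psum p (ys @ [t])) \<and>
      (\<forall>y. max_psum p (ys @ [y]) - max_psum p ys \<ge> \<bar>y\<bar> powr p) \<and>
      (\<forall>y. last ys * y > 0 \<longrightarrow>
        max_psum p (ys @ [y]) - max_psum p ys \<ge> p * \<bar>last ys\<bar> powr (p - 1) * \<bar>y\<bar>)"
    if "ys \<noteq> []" for ys
    using convex_max_psum_snoc[OF assms(1)] max_psum_snoc_monotone[OF assms(1)] max_psum_snoc_ge
      max_psum_snoc_same_sign[OF assms(1) that]
    by (simp add: le_diff_eq add.commute)
  have "max_psum p (t # xs) = max_psum p (rev xs @ [t])" for t
    by (metis max_psum_rev rev.simps(2))
  moreover have "max_psum p (rev xs) = max_psum p xs" "last (rev xs) = hd xs"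
    using assms(2) by (simp_all add: max_psum_rev last_rev)
  ultimately show ?thesis
    using snoc[OF assms(2)] snoc[of "rev xs"] assms(1,2)
    by (simp add: sp_powr_eq_max_psum)
qed

end
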